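(* Let $\mathbb{F}_q$ be a finite field of characteristic $p$ with $q$ elements, $d\ge 2$ an integer, $l$ the smallest prime divisor of $d$, $D_d$ the set of decomposable polynomials of degree $d$ in $\mathbb{F}_q[x]$, and $$\alpha_d=\begin{cases}0 & d=l,\\ q^{2l}(1-q^{-1}) & d=l^2,\\ 2q^{l+d/l}(1-q^{-1}) & \text{otherwise.}\end{cases}$$ Then: (1) if $d$ is prime, $D_d=\varnothing$; (2) $\#D_d\le \alpha_d(1+q^{-d/(3l^2)})$; (3) if $p\nmid d$, then $|\#D_d-\alpha_d|\le \alpha_d\, q^{-d/(3l^2)}$.
   Context: For $g,h\in\mathbb{F}_q[x]$, $g\circ h=g(h)$. A polynomial is decomposable if it equals $g\circ h$ with $\deg g\ge 2$ and $\deg h\ge 2$. *)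

theory Defs
  imports "HOL-Computational_Algebra.Computational_Algebra" "HOL-Library.Cardinality"
begin

definition decomposable :: "'a::field poly \<Rightarrow> bool" where
  "decomposable f \<longleftrightarrow> (\<exists>g h. degree g \<ge> 2 \<and> degree h \<ge> 2 \<and> f = pcompose g h)"

definition decomp_set :: "nat \<Rightarrow> 'a::field poly set" where
  "decomp_set d = {f. degree f = d \<and> decomposable f}"

definition min_prime_factor :: "nat \<Rightarrow> nat" where
  "min_prime_factor d = Min {l. prime l \<and> l dvd d}"

definition alpha_d :: "nat \<Rightarrow> nat \<Rightarrow> real" where
  "alpha_d q d = (let l = min_prime_factor d in
     if d = l then 0
     else if d = l^2 then real q ^ (2*l) * (1 - 1 / real q)
     else 2 * real q ^ (l + d div l) * (1 - 1 / real q))"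

end

theory Submission
  imports Defs "HOL-Library.FuncSet"
begin

(* A decomposable f of degree d can be written as g \<circ> h with h monic, h(0) = 0 and deg h = e for
   a nontrivial divisor e of d, so #D_d is at most the sum over e of q^(e + d/e) (1 - 1/q).  The
   extreme divisors e = l and e = d/l give the main term alpha_d; for the other divisors the
   exponent e + d/e falls below l + d/l - d/(3 l^2) by a margin growing linearly in e - l, so
   together they contribute at most alpha_d q^(-d/(3 l^2)).  If p does not divide d, the right
   component is an approximate (d/e)-th root of f, so the normalised pair (g, h) is determined by
   f and both extreme families have exactly q^(l + d/l) (1 - 1/q) members; a polynomial lying in
   both families is determined by few of its coefficients, which makes their overlap small. *)

section \<open>Counting polynomials over a finite field\<close>

lemma card_degree_le_fixed_coeffs:
  fixes c :: "nat \<Rightarrow> 'a::{finite,field}"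
  assumes B: "B \<subseteq> {..n}"
  shows "card {p::'a poly. degree p \<le> n \<and> (\<forall>i\<in>B. coeff p i = c i)} = CARD('a) ^ (Suc n - card B)"
proof -
  let ?S = "{p::'a poly. degree p \<le> n \<and> (\<forall>i\<in>B. coeff p i = c i)}"
  let ?C = "{..n} - B"
  let ?f = "\<lambda>p::'a poly. restrict (coeff p) ?C"
  have "bij_betw ?f ?S (?C \<rightarrow>\<^sub>E UNIV)"
  proof (rule bij_betw_imageI)
    show "inj_on ?f ?S"
    proof (rule inj_onI)
      fix p1 p2 assume p1: "p1 \<in> ?S" and p2: "p2 \<in> ?S" and eq: "?f p1 = ?f p2"
      show "p1 = p2"
      proof (rule poly_eqI)
        fix i
        consider "i \<in> B" | "i \<in> ?C" | "n < i" by fastforce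
        then show "coeff p1 i = coeff p2 i"
        proof cases
          case 2
          then show ?thesis using fun_cong[OF eq, of i] by simp
        next
          case 3
          then show ?thesis using p1 p2 by (simp add: coeff_eq_0)
        qed (use p1 p2 in auto)
      qed
    qed
    show "?f ` ?S = ?C \<rightarrow>\<^sub>E UNIV"
    proof
      show "?f ` ?S \<subseteq> ?C \<rightarrow>\<^sub>E UNIV" by (intro image_subsetI, subst restrict_PiE_iff) simp
    next
      show "?C \<rightarrow>\<^sub>E UNIV \<subseteq> ?f ` ?S"
      proof
        fix \<phi> assume phi: "\<phi> \<in> ?C \<rightarrow>\<^sub>E (UNIV :: 'a set)"
        define p where "p = Poly (map (\<lambda>i. if i \<in> B then c i else \<phi> i) [0..<Suc n])"
        have cp: "coeff p i = (if i \<le> n then (if i \<in> B then c i else \<phi> i) else 0)" for i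
          by (auto simp: p_def nth_default_def simp del: upt_Suc)
        have "degree p \<le> n" by (rule degree_le) (auto simp: cp)
        moreover have "?f p = \<phi>"
          using phi by (auto simp: cp fun_eq_iff PiE_def extensional_def)
        ultimately show "\<phi> \<in> ?f ` ?S" using B by (force simp: cp)
      qed
    qed
  qed
  then have "card ?S = card (?C \<rightarrow>\<^sub>E (UNIV :: 'a set))" by (rule bij_betw_same_card)
  also have "\<dots> = CARD('a) ^ (Suc n - card B)"
    using B by (simp add: card_PiE card_Diff_subset finite_subset)
  finally show ?thesis .
qed

lemma card_degree_le: "card {p::'a::{finite,field} poly. degree p \<le> n} = CARD('a) ^ Suc n"
  using card_degree_le_fixed_coeffs[of "{}" n "\<lambda>_. 0"] by simp

lemma finite_degree_le: "finite {p::'a::{finite,field} poly. degree p \<le> n}"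
  using card_degree_le[of n, where 'a='a] by (intro card_ge_0_finite) simp

lemma finite_degree_eq: "finite {p::'a::{finite,field} poly. degree p = n}"
  by (rule finite_subset[OF _ finite_degree_le[of n]]) auto

lemma card_degree_eq:
  assumes "k \<ge> 1"
  shows "card {p::'a::{finite,field} poly. degree p = k} = CARD('a) ^ Suc k - CARD('a) ^ k"
proof -
  have eq: "{p::'a poly. degree p = k} =
      {p. degree p \<le> k} - {p. degree p \<le> k \<and> (\<forall>i\<in>{k}. coeff p i = 0)}"
    using assms by (auto simp: le_antisym le_degree coeff_eq_0)
  show ?thesis
    unfolding eq
    by (subst card_Diff_subset)
      (auto intro: finite_subset[OF _ finite_degree_le]
        simp: card_degree_le card_degree_le_fixed_coeffs[of "{k}" k "\<lambda>_. 0", simplified])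
qed

text \<open>Right components are normalised to be monic and \<^emph>\<open>original\<close>, i.e. to vanish at 0.\<close>

definition monic_original :: "nat \<Rightarrow> 'a::field poly set" where
  "monic_original e = {h. lead_coeff h = 1 \<and> coeff h 0 = 0 \<and> degree h = e}"

lemma monic_original_degree_pos:
  assumes "h \<in> monic_original e"
  shows "e \<ge> 1"
  using assms by (cases "e = 0") (auto simp: monic_original_def)

lemma finite_monic_original: "finite (monic_original e :: 'a::{finite,field} poly set)"
  by (rule finite_subset[OF _ finite_degree_le[of e]]) (auto simp: monic_original_def)

lemma card_monic_original:
  assumes "e \<ge> 1"
  shows "card (monic_original e :: 'a::{finite,field} poly set) = CARD('a) ^ (e - 1)"
proof -
  define c :: "nat \<Rightarrow> 'a" where "c i = (if i = 0 then 0 else 1)" for i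
  have "degree p = e" if "degree p \<le> e" "coeff p e = 1" for p :: "'a poly"
    using that le_degree[of p e] by simp
  then have eq: "monic_original e = {p::'a poly. degree p \<le> e \<and> (\<forall>i\<in>{0,e}. coeff p i = c i)}"
    using assms by (auto simp: monic_original_def c_def)
  show ?thesis
    unfolding eq using assms by (subst card_degree_le_fixed_coeffs) auto
qed

lemma card_degree_eq_times_card_monic_original:
  assumes "k \<ge> 1" "e \<ge> 1"
  shows "real (card {g::'a::{finite,field} poly. degree g = k}
      * card (monic_original e :: 'a poly set))
    = real CARD('a) ^ (k + e) * (1 - 1 / real CARD('a))"
proof -
  define q where "q = CARD('a)"
  have "q > 0" by (simp add: q_def)
  have "real (card {g::'a poly. degree g = k} * card (monic_original e :: 'a poly set))
      = (real q ^ Suc k - real q ^ k) * real q ^ (e - 1)"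
    using assms \<open>q > 0\<close> by (simp add: card_degree_eq card_monic_original q_def of_nat_diff)
  also have "\<dots> = real q ^ (k + e) * (1 - 1 / real q)"
    using assms \<open>q > 0\<close> by (cases e) (simp_all add: field_simps power_add)
  finally show ?thesis by (simp add: q_def)
qed

section \<open>Normal form and uniqueness of compositions\<close>

lemma pcompose_right_cancel:
  fixes g1 g2 h :: "'a::field poly"
  assumes "degree h \<ge> 1" "pcompose g1 h = pcompose g2 h"
  shows "g1 = g2"
proof -
  have "pcompose (g1 - g2) h = 0" using assms by (simp add: pcompose_diff)
  then show ?thesis using assms by (simp add: pcompose_eq_0_iff)
qed

lemma pcompose_monic_original_normal_form:
  fixes g h :: "'a::field poly"
  assumes "degree h \<ge> 1"
  obtains g' h' where "h' \<in> monic_original (degree h)" "degree g' = degree g"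
    "pcompose g h = pcompose g' h'"
proof
  define a where "a = lead_coeff h"
  define b where "b = coeff h 0"
  have "a \<noteq> 0" using assms by (auto simp: a_def)
  define h' where "h' = smult (inverse a) (h - [:b:])"
  have "h - [:b:] = h + [:-b:]" by simp
  also have "degree \<dots> = degree h"
    using assms by (intro degree_add_eq_left) simp
  finally have deg: "degree (h - [:b:]) = degree h" .
  then have "lead_coeff (h - [:b:]) = a"
    using assms by (simp add: a_def coeff_pCons split: nat.split)
  with \<open>a \<noteq> 0\<close> deg show "h' \<in> monic_original (degree h)"
    by (simp add: monic_original_def h'_def b_def)
  have "pcompose [:b, a:] h' = h"
    using \<open>a \<noteq> 0\<close> by (simp add: pcompose_pCons h'_def)
  then show "pcompose g h = pcompose (pcompose g [:b, a:]) h'"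
    by (simp add: pcompose_assoc[symmetric])
  show "degree (pcompose g [:b, a:]) = degree g"
    using \<open>a \<noteq> 0\<close> by (simp add: degree_pcompose)
qed

lemma
  fixes g h :: "'a::field poly"
  assumes "h \<in> monic_original e"
  shows lead_coeff_pcompose_monic_original: "lead_coeff (pcompose g h) = lead_coeff g"
    and degree_pcompose_monic_original: "degree (pcompose g h) = degree g * e"
proof -
  have "lead_coeff h = 1" "degree h = e" "e \<ge> 1"
    using assms monic_original_degree_pos[OF assms] by (auto simp: monic_original_def)
  then show "lead_coeff (pcompose g h) = lead_coeff g" "degree (pcompose g h) = degree g * e"
    using lead_coeff_comp[of h g] by (simp_all add: degree_pcompose)
qed

lemma pcompose_monom_one: "pcompose (monom 1 m) h = h ^ m"
proof -
  have "pcompose ([:0, 1:] ^ m) h = h ^ m"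
    by (induction m) (simp_all add: pcompose_mult pcompose_pCons pcompose_1)
  then show ?thesis by (simp add: monom_altdef)
qed

lemma degree_diff_monom_one_le:
  fixes u :: "'a::field poly"
  assumes "lead_coeff u = 1" "degree u = m"
  shows "degree (u - monom 1 m) \<le> m - 1"
proof (rule degree_le, intro allI impI)
  fix i assume "m - 1 < i"
  then consider "i = m" | "i > m" by linarith
  then show "coeff (u - monom 1 m) i = 0"
    by cases (use assms in \<open>simp_all add: coeff_monom coeff_eq_0\<close>)
qed

text \<open>The cofactor of \<open>h\<^sub>1 - h\<^sub>2\<close> in \<open>h\<^sub>1\<^sup>m - h\<^sub>2\<^sup>m\<close> has leading coefficient \<open>m\<close>; this is where
  \<open>m \<noteq> 0\<close> in the field is needed.\<close>

lemma degree_power_diff_monic: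
  fixes h1 h2 :: "'a::field poly"
  assumes h1: "lead_coeff h1 = 1" "degree h1 = e" and h2: "lead_coeff h2 = 1" "degree h2 = e"
    and "h1 \<noteq> h2" and m: "of_nat m \<noteq> (0::'a)"
  shows "degree (h1 ^ m - h2 ^ m) = degree (h1 - h2) + (m - 1) * e"
proof -
  define S where "S = (\<Sum>i<m. h2 ^ (m - Suc i) * h1 ^ i)"
  have term_deg: "degree (h2 ^ (m - Suc i) * h1 ^ i) = (m - 1) * e"
    and term_lc: "lead_coeff (h2 ^ (m - Suc i) * h1 ^ i) = 1" if "i < m" for i
  proof -
    have "h1 \<noteq> 0" "h2 \<noteq> 0" using h1 h2 by auto
    then have "degree (h2 ^ (m - Suc i) * h1 ^ i) = ((m - Suc i) + i) * e"
      using h1 h2 by (simp add: degree_mult_eq degree_power_eq add_mult_distrib)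
    then show "degree (h2 ^ (m - Suc i) * h1 ^ i) = (m - 1) * e"
      using that by simp
    show "lead_coeff (h2 ^ (m - Suc i) * h1 ^ i) = 1"
      using h1 h2 by (simp add: lead_coeff_mult lead_coeff_power)
  qed
  have top: "coeff S ((m - 1) * e) = of_nat m"
    using term_deg term_lc by (simp add: S_def coeff_sum)
  have "degree S = (m - 1) * e"
  proof (rule antisym)
    show "degree S \<le> (m - 1) * e" unfolding S_def by (rule degree_sum_le) (auto simp: term_deg)
    show "(m - 1) * e \<le> degree S" using top m by (intro le_degree) simp
  qed
  moreover have "S \<noteq> 0" using top m by auto
  moreover have "h1 ^ m - h2 ^ m = (h1 - h2) * S" by (simp add: S_def power_diff_sumr2)
  ultimately show ?thesis using \<open>h1 \<noteq> h2\<close> by (simp add: degree_mult_eq)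
qed

text \<open>The right component is an approximate \<open>m\<close>-th root of the composition:
  \<open>u \<circ> h = h\<^sup>m + (lower terms of degree \<le> (m - 1) e)\<close>, so the coefficients of
  \<open>u \<circ> h\<close> above degree \<open>(m - 1) e\<close> already determine \<open>h\<close>.\<close>

lemma monic_original_eq_of_degree_pcompose_diff_le:
  fixes u1 u2 h1 h2 :: "'a::field poly"
  assumes u1: "lead_coeff u1 = 1" "degree u1 = m" and u2: "lead_coeff u2 = 1" "degree u2 = m"
    and m: "of_nat m \<noteq> (0::'a)"
    and h1: "h1 \<in> monic_original e" and h2: "h2 \<in> monic_original e"
    and deg: "degree (pcompose u1 h1 - pcompose u2 h2) \<le> (m - 1) * e"
  shows "h1 = h2"
proof (rule ccontr)
  assume "h1 \<noteq> h2"
  have "coeff (h1 - h2) 0 = 0" using h1 h2 by (simp add: monic_original_def)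
  with \<open>h1 \<noteq> h2\<close> have "degree (h1 - h2) \<ge> 1"
    using degree_0_id[of "h1 - h2"] by (cases "degree (h1 - h2)") auto
  define r where "r = pcompose (u1 - monom 1 m) h1 - pcompose (u2 - monom 1 m) h2"
  have "degree (pcompose (u1 - monom 1 m) h1) \<le> (m - 1) * e"
    "degree (pcompose (u2 - monom 1 m) h2) \<le> (m - 1) * e"
    using degree_diff_monom_one_le[OF u1] degree_diff_monom_one_le[OF u2] h1 h2
    by (simp_all add: degree_pcompose monic_original_def)
  then have "degree r \<le> (m - 1) * e" unfolding r_def using degree_diff_le by blast
  have power_diff: "degree (h1 ^ m - h2 ^ m) = degree (h1 - h2) + (m - 1) * e"
    using degree_power_diff_monic h1 h2 \<open>h1 \<noteq> h2\<close> m by (auto simp: monic_original_def)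
  have "pcompose u1 h1 - pcompose u2 h2 = (h1 ^ m - h2 ^ m) + r"
    by (simp add: r_def pcompose_diff pcompose_monom_one)
  also have "degree \<dots> = degree (h1 ^ m - h2 ^ m)"
    using \<open>degree r \<le> _\<close> power_diff \<open>degree (h1 - h2) \<ge> 1\<close> by (intro degree_add_eq_left) simp
  finally show False using deg power_diff \<open>degree (h1 - h2) \<ge> 1\<close> by simp
qed

lemma pcompose_monic_original_inj:
  fixes g1 g2 h1 h2 :: "'a::field poly"
  assumes eq: "pcompose g1 h1 = pcompose g2 h2"
    and h: "h1 \<in> monic_original e" "h2 \<in> monic_original e"
    and g: "degree g1 = k" "degree g2 = k" "of_nat k \<noteq> (0::'a)"
  shows "g1 = g2 \<and> h1 = h2"
proof -
  define c where "c = lead_coeff g1"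
  have "c \<noteq> 0" using g by (auto simp: c_def)
  have "lead_coeff g2 = c"
    using eq lead_coeff_pcompose_monic_original h by (metis c_def)
  define u1 where "u1 = smult (inverse c) g1"
  define u2 where "u2 = smult (inverse c) g2"
  have u: "lead_coeff u1 = 1" "degree u1 = k" "lead_coeff u2 = 1" "degree u2 = k"
    using \<open>c \<noteq> 0\<close> \<open>lead_coeff g2 = c\<close> g by (auto simp: u1_def u2_def c_def)
  have "pcompose u1 h1 - pcompose u2 h2 = 0" by (simp add: u1_def u2_def pcompose_smult eq)
  then have "h1 = h2"
    using monic_original_eq_of_degree_pcompose_diff_le[OF u g(3) h] by simp
  moreover have "e \<ge> 1" using monic_original_degree_pos h by blast
  ultimately show ?thesis using eq h pcompose_right_cancel by (auto simp: monic_original_def)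
qed

section \<open>Decomposable polynomials as a union of composition sets\<close>

definition compositions :: "nat \<Rightarrow> nat \<Rightarrow> 'a::field poly set" where
  "compositions k e = (\<lambda>(g, h). pcompose g h) ` ({g. degree g = k} \<times> monic_original e)"

definition nontrivial_divisors :: "nat \<Rightarrow> nat set" where
  "nontrivial_divisors d = {e. e dvd d \<and> 2 \<le> e \<and> 2 \<le> d div e}"

lemma finite_compositions: "finite (compositions k e :: 'a::{finite,field} poly set)"
  unfolding compositions_def
  by (intro finite_imageI finite_cartesian_product finite_degree_eq finite_monic_original)

lemma card_compositions_le:
  "card (compositions k e :: 'a::{finite,field} poly set)
     \<le> card {g::'a poly. degree g = k} * card (monic_original e :: 'a poly set)"
  unfolding compositions_def
  by (metis card_cartesian_product card_image_le finite_cartesian_product finite_degree_eq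
      finite_monic_original)

lemma card_compositions:
  assumes "of_nat k \<noteq> (0::'a::{finite,field})"
  shows "card (compositions k e :: 'a poly set)
     = card {g::'a poly. degree g = k} * card (monic_original e :: 'a poly set)"
proof -
  have "inj_on (\<lambda>(g, h). pcompose g h) ({g::'a poly. degree g = k} \<times> monic_original e)"
    using pcompose_monic_original_inj[where k = k and e = e] assms by (auto intro!: inj_onI)
  then show ?thesis unfolding compositions_def by (simp add: card_image card_cartesian_product)
qed

lemma finite_nontrivial_divisors: "finite (nontrivial_divisors d)"
  by (rule finite_subset[of _ "{..d}"]) (auto simp: nontrivial_divisors_def dest: dvd_imp_le)

lemma decomp_set_eq_Union_compositions:
  "(decomp_set d :: 'a::field poly set) = (\<Union>e\<in>nontrivial_divisors d. compositions (d div e) e)"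
proof (intro equalityI subsetI)
  fix f :: "'a poly" assume "f \<in> decomp_set d"
  then obtain g h where gh: "degree g \<ge> 2" "degree h \<ge> 2" "f = pcompose g h" and "degree f = d"
    by (auto simp: decomp_set_def decomposable_def)
  then have d: "d = degree g * degree h" by (simp add: degree_pcompose)
  obtain g' h' where "h' \<in> monic_original (degree h)" "degree g' = degree g"
    "pcompose g h = pcompose g' h'"
    by (rule pcompose_monic_original_normal_form[of h g]) (use gh in simp_all)
  then have "f \<in> compositions (d div degree h) (degree h)"
    using gh d by (auto simp: compositions_def intro!: image_eqI[of _ _ "(g', h')"])
  moreover have "degree h \<in> nontrivial_divisors d"
    using gh by (auto simp: nontrivial_divisors_def d)
  ultimately show "f \<in> (\<Union>e\<in>nontrivial_divisors d. compositions (d div e) e)" by blast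
next
  fix f :: "'a poly" assume "f \<in> (\<Union>e\<in>nontrivial_divisors d. compositions (d div e) e)"
  then obtain e g h where e: "e dvd d" "2 \<le> e" "2 \<le> d div e"
    and gh: "degree g = d div e" "h \<in> monic_original e" "f = pcompose g h"
    by (auto simp: nontrivial_divisors_def compositions_def)
  then have "degree h = e" by (simp add: monic_original_def)
  with e gh have "degree f = d" by (simp add: degree_pcompose)
  moreover have "decomposable f"
    unfolding decomposable_def using e gh \<open>degree h = e\<close> by metis
  ultimately show "f \<in> decomp_set d" by (simp add: decomp_set_def)
qed

lemma finite_decomp_set: "finite (decomp_set d :: 'a::{finite,field} poly set)"
  by (rule finite_subset[OF _ finite_degree_le[of d]]) (auto simp: decomp_set_def)

lemma card_decomp_set_le_sum:
  "real (card (decomp_set d :: 'a::{finite,field} poly set))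
     \<le> (\<Sum>e\<in>nontrivial_divisors d. real CARD('a) ^ (e + d div e) * (1 - 1 / real CARD('a)))"
proof -
  let ?c = "\<lambda>e. card {g::'a poly. degree g = d div e} * card (monic_original e :: 'a poly set)"
  have "card (decomp_set d :: 'a poly set)
      \<le> (\<Sum>e\<in>nontrivial_divisors d. card (compositions (d div e) e :: 'a poly set))"
    unfolding decomp_set_eq_Union_compositions by (rule card_UN_le[OF finite_nontrivial_divisors])
  also have "\<dots> \<le> (\<Sum>e\<in>nontrivial_divisors d. ?c e)"
    by (intro sum_mono card_compositions_le)
  finally have "real (card (decomp_set d :: 'a poly set)) \<le> (\<Sum>e\<in>nontrivial_divisors d. real (?c e))"
    by (simp only: of_nat_sum[symmetric] of_nat_le_iff)
  also have "\<dots> = (\<Sum>e\<in>nontrivial_divisors d.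
      real CARD('a) ^ (d div e + e) * (1 - 1 / real CARD('a)))"
    by (intro sum.cong refl card_degree_eq_times_card_monic_original)
      (auto simp: nontrivial_divisors_def)
  finally show ?thesis by (simp add: add.commute)
qed

section \<open>Polynomials with two decompositions\<close>

lemma poly_eq_of_coeffs_eq_at_common_multiples:
  fixes f1 f2 a b h h' :: "'a::field poly"
  assumes "f1 - f2 = pcompose a h" "f1 - f2 = pcompose b h'"
    and "degree f1 \<le> n" "degree f2 \<le> n"
    and "\<And>s. s \<le> n \<Longrightarrow> degree h dvd s \<Longrightarrow> degree h' dvd s \<Longrightarrow> coeff f1 s = coeff f2 s"
  shows "f1 = f2"
proof (rule ccontr)
  assume "f1 \<noteq> f2"
  define s where "s = degree (f1 - f2)"
  have "s \<le> n" using assms(3,4) degree_diff_le by (auto simp: s_def)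
  moreover have "degree h dvd s" unfolding s_def assms(1) by (simp add: degree_pcompose)
  moreover have "degree h' dvd s" unfolding s_def assms(2) by (simp add: degree_pcompose)
  ultimately have "coeff (f1 - f2) s = 0" using assms(5) by simp
  with \<open>f1 \<noteq> f2\<close> show False
    unfolding s_def by (metis leading_coeff_0_iff right_minus_eq)
qed

lemma top_coeffs_degree_bound:
  fixes m l :: nat
  assumes "l \<ge> 1"
  shows "(m - 1 - (m - 1) div l) * l \<le> (l - 1) * m"
proof -
  define k where "k = (m - 1) div l"
  have "m - 1 < (k + 1) * l" using assms by (simp add: k_def dividend_less_div_times)
  then have "m \<le> k * l + l" by simp
  moreover have "(m - 1 - k) * l = m * l - l - k * l" "(l - 1) * m = m * l - m"
    by (simp_all add: diff_mult_distrib mult.commute[of m l])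
  moreover have "m \<le> m * l" using assms by simp
  ultimately show ?thesis unfolding k_def[symmetric] by linarith
qed

text \<open>Agreement of the top \<open>(m - 1) div l\<close> normalised coefficients of the outer components makes
  the two compositions agree above degree \<open>(l - 1) m\<close>, which by the approximate-root lemma
  forces equal right components of degree \<open>m\<close>.\<close>

lemma compositions_inter_right_eq:
  fixes f1 f2 G1 G2 H g1 g2 h1 h2 :: "'a::field poly"
  assumes tame: "of_nat l \<noteq> (0::'a)"
    and G: "f1 = pcompose G1 H" "f2 = pcompose G2 H" "degree G1 = m" "degree G2 = m"
      "H \<in> monic_original l"
    and g: "f1 = pcompose g1 h1" "f2 = pcompose g2 h2" "degree g1 = l" "degree g2 = l"
      "h1 \<in> monic_original m" "h2 \<in> monic_original m"
    and top: "\<And>j. m - (m - 1) div l \<le> j \<Longrightarrow> j < m \<Longrightarrow>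
      coeff G1 j / lead_coeff G1 = coeff G2 j / lead_coeff G2"
    and lc: "lead_coeff f1 = lead_coeff f2"
  shows "h1 = h2"
proof -
  define c where "c = lead_coeff f1"
  have "l \<ge> 1" using G(5) monic_original_degree_pos by blast
  have lc_G: "lead_coeff G1 = c" "lead_coeff G2 = c"
    using lead_coeff_pcompose_monic_original[OF G(5)] G(1,2) lc by (simp_all add: c_def)
  have lc_g: "lead_coeff g1 = c" "lead_coeff g2 = c"
    using lead_coeff_pcompose_monic_original[OF g(5)] lead_coeff_pcompose_monic_original[OF g(6)]
      g(1,2) lc by (simp_all add: c_def)
  have "c \<noteq> 0" using lc_g(1) g(3) \<open>l \<ge> 1\<close> by auto
  have "degree (G1 - G2) \<le> m - 1 - (m - 1) div l"
  proof (rule degree_le, intro allI impI)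
    fix j assume "m - 1 - (m - 1) div l < j"
    then consider "m - (m - 1) div l \<le> j" "j < m" | "j = m" | "m < j" by linarith
    then show "coeff (G1 - G2) j = 0"
      by cases (use top[of j] lc_G G(3,4) \<open>c \<noteq> 0\<close> in \<open>simp_all add: coeff_eq_0\<close>)
  qed
  then have "degree (pcompose (G1 - G2) H) \<le> (m - 1 - (m - 1) div l) * l"
    using degree_pcompose_monic_original[OF G(5)] by simp
  also have "\<dots> \<le> (l - 1) * m" by (rule top_coeffs_degree_bound[OF \<open>l \<ge> 1\<close>])
  also have "pcompose (G1 - G2) H
      = smult c (pcompose (smult (inverse c) g1) h1 - pcompose (smult (inverse c) g2) h2)"
    using G(1,2) g(1,2) \<open>c \<noteq> 0\<close> by (simp add: pcompose_diff pcompose_smult smult_diff_right)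
  finally have deg_diff:
      "degree (pcompose (smult (inverse c) g1) h1 - pcompose (smult (inverse c) g2) h2) \<le> (l - 1) * m"
    using \<open>c \<noteq> 0\<close> by simp
  have "lead_coeff (smult (inverse c) g1) = 1" "lead_coeff (smult (inverse c) g2) = 1"
    using lc_g \<open>c \<noteq> 0\<close> by simp_all
  then show "h1 = h2"
    using monic_original_eq_of_degree_pcompose_diff_le[OF _ _ _ _ tame g(5,6) deg_diff]
      \<open>c \<noteq> 0\<close> g(3,4) by simp
qed

text \<open>Once the right components of degree \<open>m\<close> agree, the difference of the two polynomials is a
  composition with right components of degrees \<open>l\<close> and \<open>m\<close>, so its degree is a common
  multiple of \<open>l\<close> and \<open>m\<close>.\<close>

lemma compositions_inter_eqI:
  fixes f1 f2 G1 G2 H g1 g2 h1 h2 :: "'a::field poly"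
  assumes tame: "of_nat l \<noteq> (0::'a)"
    and G: "f1 = pcompose G1 H" "f2 = pcompose G2 H" "degree G1 = m" "degree G2 = m"
      "H \<in> monic_original l"
    and g: "f1 = pcompose g1 h1" "f2 = pcompose g2 h2" "degree g1 = l" "degree g2 = l"
      "h1 \<in> monic_original m" "h2 \<in> monic_original m"
    and top: "\<And>j. m - (m - 1) div l \<le> j \<Longrightarrow> j < m \<Longrightarrow>
      coeff G1 j / lead_coeff G1 = coeff G2 j / lead_coeff G2"
    and common: "\<And>s. s \<le> l * m \<Longrightarrow> l dvd s \<Longrightarrow> m dvd s \<Longrightarrow> coeff f1 s = coeff f2 s"
  shows "f1 = f2"
proof -
  have deg_f: "degree f1 = l * m" "degree f2 = l * m"
    using degree_pcompose_monic_original[OF G(5), of G1]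
      degree_pcompose_monic_original[OF G(5), of G2] G(1-4)
    by (simp_all add: mult.commute)
  then have "lead_coeff f1 = lead_coeff f2" using common[of "l * m"] by simp
  then have "h1 = h2" using compositions_inter_right_eq[OF tame G g top] by blast
  then have diff: "f1 - f2 = pcompose (G1 - G2) H" "f1 - f2 = pcompose (g1 - g2) h1"
    using G(1,2) g(1,2) by (simp_all add: pcompose_diff)
  have "degree H = l" "degree h1 = m" using G(5) g(5) by (simp_all add: monic_original_def)
  then have "coeff f1 s = coeff f2 s" if "s \<le> l * m" "degree H dvd s" "degree h1 dvd s" for s
    using common that by simp
  then show "f1 = f2"
    using deg_f
    by (intro poly_eq_of_coeffs_eq_at_common_multiples[OF diff, where n = "l * m"]) simp_all
qed

lemma card_compositions_inter_le:
  assumes tame: "of_nat l \<noteq> (0::'a::{finite,field})"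
  shows "card (compositions m l \<inter> compositions l m :: 'a poly set)
    \<le> CARD('a) ^ (l - 1 + (m - 1) div l + card {s. s \<le> l * m \<and> l dvd s \<and> m dvd s})"
proof -
  define k where "k = (m - 1) div l"
  define S where "S = {s. s \<le> l * m \<and> l dvd s \<and> m dvd s}"
  define I where "I = (compositions m l \<inter> compositions l m :: 'a poly set)"
  have "l \<ge> 1" using tame by (cases l) auto
  have "k \<le> m" unfolding k_def using div_le_dividend[of "m - 1" l] by linarith
  have "\<forall>f\<in>I. \<exists>GH. degree (fst GH) = m \<and> snd GH \<in> monic_original l \<and> f = pcompose (fst GH) (snd GH)"
    by (auto simp: I_def compositions_def)
  then obtain rep where rep: "\<And>f. f \<in> I \<Longrightarrow> degree (fst (rep f)) = m"
      "\<And>f. f \<in> I \<Longrightarrow> snd (rep f) \<in> monic_original l"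
      "\<And>f. f \<in> I \<Longrightarrow> f = pcompose (fst (rep f)) (snd (rep f))"
    by (metis bchoice)
  define \<Phi> where "\<Phi> f = (snd (rep f),
      restrict (\<lambda>j. coeff (fst (rep f)) j / lead_coeff (fst (rep f))) {m - k..<m},
      restrict (coeff f) S)" for f
  let ?T = "(monic_original l :: 'a poly set)
    \<times> ({m - k..<m} \<rightarrow>\<^sub>E (UNIV :: 'a set)) \<times> (S \<rightarrow>\<^sub>E (UNIV :: 'a set))"
  have "\<Phi> ` I \<subseteq> ?T"
    using rep by (auto simp: \<Phi>_def)
  moreover have "inj_on \<Phi> I"
  proof (rule inj_onI)
    fix f1 f2 assume f1: "f1 \<in> I" and f2: "f2 \<in> I" and eq: "\<Phi> f1 = \<Phi> f2"
    define G1 G2 H where "G1 = fst (rep f1)" and "G2 = fst (rep f2)" and "H = snd (rep f1)"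
    have "snd (rep f2) = H" using eq by (simp add: \<Phi>_def H_def)
    then have G: "f1 = pcompose G1 H" "f2 = pcompose G2 H" "degree G1 = m" "degree G2 = m"
      "H \<in> monic_original l"
      using rep[OF f1] rep[OF f2] by (simp_all add: G1_def G2_def H_def)
    obtain g1 h1 g2 h2 where g: "f1 = pcompose g1 h1" "f2 = pcompose g2 h2" "degree g1 = l"
      "degree g2 = l" "h1 \<in> monic_original m" "h2 \<in> monic_original m"
      using f1 f2 by (auto simp: I_def compositions_def)
    have "coeff G1 j / lead_coeff G1 = coeff G2 j / lead_coeff G2"
      if "m - (m - 1) div l \<le> j" "j < m" for j
      using fun_cong[OF arg_cong[where f = "\<lambda>x. fst (snd x)", OF eq], of j] that
      by (simp add: \<Phi>_def G1_def G2_def k_def)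
    moreover have "coeff f1 s = coeff f2 s" if "s \<le> l * m" "l dvd s" "m dvd s" for s
      using fun_cong[OF arg_cong[where f = "\<lambda>x. snd (snd x)", OF eq], of s] that
      by (simp add: \<Phi>_def S_def)
    ultimately show "f1 = f2" by (rule compositions_inter_eqI[OF tame G g])
  qed
  moreover have "finite ?T"
    by (intro finite_cartesian_product finite_PiE finite_monic_original) (auto simp: S_def)
  ultimately have "card I \<le> card ?T" by (intro card_inj_on_le)
  also have "\<dots> = CARD('a) ^ (l - 1) * CARD('a) ^ k * CARD('a) ^ card S"
    using \<open>l \<ge> 1\<close> \<open>k \<le> m\<close> by (simp add: card_cartesian_product card_monic_original card_PiE S_def)
  finally show ?thesis by (simp add: I_def k_def S_def power_add)
qed

section \<open>Divisors and the least prime factor\<close>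

lemma
  fixes d :: nat
  assumes "d \<ge> 2"
  shows prime_min_prime_factor: "prime (min_prime_factor d)"
    and min_prime_factor_dvd: "min_prime_factor d dvd d"
    and min_prime_factor_le: "\<And>t. t \<ge> 2 \<Longrightarrow> t dvd d \<Longrightarrow> min_prime_factor d \<le> t"
proof -
  define P where "P = {l::nat. prime l \<and> l dvd d}"
  have "finite P"
    using assms by (auto simp: P_def intro: finite_subset[of _ "{..d}"] dest: dvd_imp_le)
  obtain p where "prime p" "p dvd d" using prime_factor_nat[of d] assms by auto
  then have "P \<noteq> {}" by (auto simp: P_def)
  have "Min P \<in> P" using \<open>finite P\<close> \<open>P \<noteq> {}\<close> by (rule Min_in)
  then show "prime (min_prime_factor d)" "min_prime_factor d dvd d"
    by (auto simp: P_def min_prime_factor_def)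
  fix t :: nat assume "t \<ge> 2" "t dvd d"
  then obtain p where p: "prime p" "p dvd t" using prime_factor_nat[of t] by auto
  then have "p \<le> t" "p \<in> P" using \<open>t \<ge> 2\<close> \<open>t dvd d\<close> by (auto simp: P_def intro: dvd_imp_le dvd_trans)
  have "Min P \<le> p" using \<open>finite P\<close> \<open>p \<in> P\<close> by (rule Min_le)
  with \<open>p \<le> t\<close> show "min_prime_factor d \<le> t" by (simp add: min_prime_factor_def P_def)
qed

lemma nontrivial_divisors_prime: "prime d \<Longrightarrow> nontrivial_divisors d = {}"
  by (auto simp: nontrivial_divisors_def prime_nat_iff)

lemma nontrivial_divisors_prime_square:
  assumes "prime l"
  shows "nontrivial_divisors (l ^ 2) = {l}"
proof -
  have "e \<in> nontrivial_divisors (l ^ 2) \<longleftrightarrow> e = l" for e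
  proof
    assume e: "e \<in> nontrivial_divisors (l ^ 2)"
    then obtain i where "i \<le> 2" "e = l ^ i"
      using divides_primepow_nat[OF assms] by (auto simp: nontrivial_divisors_def)
    with e assms show "e = l"
      by (auto simp: nontrivial_divisors_def le_Suc_eq numeral_2_eq_2)
  qed (use assms prime_ge_2_nat in \<open>auto simp: nontrivial_divisors_def power2_eq_square\<close>)
  then show ?thesis by blast
qed

definition inner_divisors :: "nat \<Rightarrow> nat \<Rightarrow> nat set" where
  "inner_divisors l d = {e. e dvd d \<and> l < e \<and> l < d div e}"

lemma finite_inner_divisors: "d > 0 \<Longrightarrow> finite (inner_divisors l d)"
  by (rule finite_subset[of _ "{..d}"]) (auto simp: inner_divisors_def dest: dvd_imp_le)

lemma nontrivial_divisors_eq_insert_inner_divisors: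
  fixes l m :: nat
  assumes "prime l" and least: "\<And>t. t \<ge> 2 \<Longrightarrow> t dvd l * m \<Longrightarrow> l \<le> t" and "m \<ge> 2"
  shows "nontrivial_divisors (l * m) = insert l (insert m (inner_divisors l (l * m)))"
proof (intro set_eqI iffI)
  fix e assume "e \<in> nontrivial_divisors (l * m)"
  then have e: "e dvd l * m" "2 \<le> e" "2 \<le> l * m div e" by (auto simp: nontrivial_divisors_def)
  have "l \<le> e" using least e by blast
  moreover have "l < l * m div e \<or> e = m"
  proof (cases "l * m div e = l")
    case True
    then show ?thesis
      using e(1) \<open>prime l\<close> prime_gt_0_nat by (metis div_mult_self1_is_m dvd_mult_div_cancel mult.commute)
  next
    case False
    moreover have "l \<le> l * m div e" using least e(3) by (metis dvd_div_mult_self dvd_triv_left e(1))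
    ultimately show ?thesis by simp
  qed
  ultimately show "e \<in> insert l (insert m (inner_divisors l (l * m)))"
    using e by (auto simp: inner_divisors_def)
next
  fix e assume "e \<in> insert l (insert m (inner_divisors l (l * m)))"
  moreover have "l \<ge> 2" using \<open>prime l\<close> prime_ge_2_nat by blast
  ultimately show "e \<in> nontrivial_divisors (l * m)"
    using \<open>m \<ge> 2\<close> by (auto simp: nontrivial_divisors_def inner_divisors_def)
qed

text \<open>An inner divisor exists only when \<open>d / l\<close> is large: each of \<open>e\<close> and \<open>d / e\<close> exceeds \<open>l\<close>,
  and one of them is \<open>l\<close> times a cofactor that is itself at least \<open>l\<close>.\<close>

lemma inner_divisor_imp_large:
  fixes l m e :: nat
  assumes "prime l" and least: "\<And>t. t \<ge> 2 \<Longrightarrow> t dvd l * m \<Longrightarrow> l \<le> t"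
    and "e \<in> inner_divisors l (l * m)"
  shows "l * (l + 1) \<le> m"
proof -
  define e' where "e' = l * m div e"
  have e: "e dvd l * m" "l < e" "l < e'" using assms(3) by (auto simp: inner_divisors_def e'_def)
  have ee: "e * e' = l * m" using e(1) by (simp add: e'_def)
  have "l \<ge> 2" using \<open>prime l\<close> prime_ge_2_nat by blast
  have large: "l * (l + 1) \<le> m" if "a * b = l * m" "l dvd a" "l < a" "l < b" for a b
  proof -
    obtain t where t: "a = l * t" using \<open>l dvd a\<close> by (auto elim: dvdE)
    with \<open>l < a\<close> have "t \<ge> 2" by (cases t) auto
    moreover have "t dvd l * m" unfolding that(1)[symmetric] t by simp
    ultimately have "l \<le> t" using least by blast
    have "t * b = m" using that(1) t \<open>l \<ge> 2\<close> by (simp add: mult.assoc)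
    moreover have "l * (l + 1) \<le> t * b" using \<open>l \<le> t\<close> \<open>l < b\<close> by (intro mult_le_mono) auto
    ultimately show ?thesis by simp
  qed
  have "l dvd e * e'" using ee by simp
  then have "l dvd e \<or> l dvd e'" using \<open>prime l\<close> prime_dvd_mult_nat by blast
  then show ?thesis
  proof
    assume "l dvd e"
    then show ?thesis using large[of e e'] ee e by simp
  next
    assume "l dvd e'"
    then show ?thesis using large[of e' e] ee e by (simp add: mult.commute)
  qed
qed

lemma card_common_multiples_le:
  fixes l m :: nat
  assumes "prime l" "m \<ge> 1"
  shows "card {s. s \<le> l * m \<and> l dvd s \<and> m dvd s} \<le> (if l dvd m then l else 1) + 1"
proof (cases "l dvd m")
  case True
  have "{s. s \<le> l * m \<and> l dvd s \<and> m dvd s} \<subseteq> (\<lambda>i. i * m) ` {0..l}"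
    using \<open>m \<ge> 1\<close> by (auto elim!: dvdE simp: mult.commute[of m])
  then have "card {s. s \<le> l * m \<and> l dvd s \<and> m dvd s} \<le> card {0..l}"
    by (meson card_image_le card_mono finite_atLeastAtMost finite_imageI le_trans)
  then show ?thesis using True by simp
next
  case False
  then have "coprime l m" using \<open>prime l\<close> by (simp add: prime_imp_coprime)
  have "s \<in> {0, l * m}" if s: "s \<le> l * m" "l dvd s" "m dvd s" for s
  proof -
    obtain i where i: "s = l * m * i" using divides_mult[OF s(2,3) \<open>coprime l m\<close>] by blast
    have "l * m > 0" using \<open>prime l\<close> \<open>m \<ge> 1\<close> prime_gt_0_nat by simp
    with s(1) i have "i \<le> 1" by simp
    with i show ?thesis by (cases i) auto
  qed
  then have "{s. s \<le> l * m \<and> l dvd s \<and> m dvd s} \<subseteq> {0, l * m}" by blast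
  then have "card {s. s \<le> l * m \<and> l dvd s \<and> m dvd s} \<le> card {0, l * m}"
    by (rule card_mono[rotated]) simp
  also have "\<dots> \<le> 2" by (simp add: card_insert_if)
  finally show ?thesis using False by simp
qed

section \<open>The contribution of the inner divisors\<close>

lemma power_le_powr_times_half_power:
  fixes q x s :: nat and y :: real
  assumes "q \<ge> 2" "real (x + s) \<le> y"
  shows "real q ^ x \<le> real q powr y * (1 / 2) ^ s"
proof -
  have q: "real q > 0" using assms by simp
  have "real q ^ x = real q powr real x" by (rule powr_realpow[OF q, symmetric])
  also have "\<dots> \<le> real q powr (y - real s)" using assms by (intro powr_mono) auto
  also have "\<dots> = real q powr y * (1 / real q) ^ s"
    by (simp add: powr_diff powr_realpow[OF q] power_one_over divide_inverse power_inverse)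
  also have "\<dots> \<le> real q powr y * (1 / 2) ^ s"
    using assms by (intro mult_left_mono power_mono) (auto simp: divide_simps)
  finally show ?thesis .
qed

lemma divisor_exponent_le:
  fixes l m e s :: nat
  assumes "l \<ge> 1" "l < e" "e dvd l * m"
    and gap: "3 * real l * real (e - l) * real e * real (Suc s) + real m * real e
      \<le> 3 * real l * real m * real (e - l)"
  shows "real (e + l * m div e + s * (e - l)) \<le> real l + real m - real m / (3 * real l)"
proof -
  define L M E J where "L = real l" and "M = real m" and "E = real e" and "J = real (e - l)"
  have "L > 0" "E > 0" "J = E - L" using assms by (auto simp: L_def E_def J_def)
  have "real (e + l * m div e + s * (e - l)) = E + L * M / E + real s * J"
    using assms by (simp add: L_def M_def E_def J_def real_of_nat_div)
  moreover have "L + M - M / (3 * L) - (E + L * M / E + real s * J)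
      = (3 * L * M * J - (3 * L * J * E * real (Suc s) + M * E)) / (3 * L * E)"
    using \<open>L > 0\<close> \<open>E > 0\<close> unfolding \<open>J = E - L\<close> by (simp add: field_simps)
  moreover have "0 \<le> (3 * L * M * J - (3 * L * J * E * real (Suc s) + M * E)) / (3 * L * E)"
    using gap \<open>L > 0\<close> \<open>E > 0\<close> by (intro divide_nonneg_pos) (auto simp: L_def M_def E_def J_def)
  ultimately show ?thesis by (simp add: L_def M_def)
qed

lemma inner_divisor_term_le:
  fixes l m e s q :: nat
  assumes "q \<ge> 2" "l \<ge> 1" "l < e" "e dvd l * m"
    and "3 * real l * real (e - l) * real e * real (Suc s) + real m * real e
      \<le> 3 * real l * real m * real (e - l)"
  shows "real q ^ (e + l * m div e)
    \<le> real q powr (real l + real m - real m / (3 * real l)) * (1 / 2) ^ (s * (e - l))"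
  using assms by (intro power_le_powr_times_half_power divisor_exponent_le)

lemma sum_half_power_diff_le_one:
  fixes S :: "nat set"
  assumes "finite S" "\<And>e. e \<in> S \<Longrightarrow> l < e"
  shows "(\<Sum>e\<in>S. (1 / 2 :: real) ^ (e - l)) \<le> 1"
proof -
  have "inj_on (\<lambda>e. e - l - 1) S" by (auto intro!: inj_onI dest!: assms(2))
  have "(\<Sum>e\<in>S. (1 / 2 :: real) ^ (e - l)) = (\<Sum>e\<in>S. (1 / 2) ^ Suc (e - l - 1))"
    using assms(2) by (intro sum.cong) (auto simp: Suc_diff_Suc)
  also have "\<dots> = (\<Sum>i\<in>(\<lambda>e. e - l - 1) ` S. (1 / 2) ^ Suc i)"
    using \<open>inj_on _ S\<close> by (simp add: sum.reindex)
  also have "\<dots> \<le> (\<Sum>i. (1 / 2) ^ Suc i)"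
    using power_half_series assms(1) by (intro sum_le_suminf) (auto simp: sums_iff)
  also have "\<dots> = 1" using power_half_series by (simp add: sums_iff)
  finally show ?thesis .
qed

lemma divisor_gap_two:
  fixes m j :: nat
  assumes "j \<ge> 1" "(2 + j) * (2 + j) \<le> 2 * m" "m = 12 \<or> m \<ge> 14"
  shows "6 * 2 * real j * (2 + real j) + real m * (2 + real j) \<le> 3 * 2 * real m * real j"
proof -
  have m12: "real m \<ge> 12" using assms(3) by auto
  consider "j = 1" | "j = 2" | "j = 3" | "j \<ge> 4" using assms by linarith
  then show ?thesis
  proof cases
    case 3
    then have "m \<noteq> 12" using assms(2) by auto
    then have "real m \<ge> 14" using assms(3) by auto
    then show ?thesis using 3 by simp
  next
    case 4
    have "real ((2 + j) * (2 + j)) \<le> real (2 * m)" using assms(2) by (simp only: of_nat_le_iff)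
    then have m: "(2 + real j) * (2 + real j) \<le> 2 * real m" by (simp add: algebra_simps)
    have "real j * (5 * real j - 16) \<ge> 4 * 4" using 4 by (intro mult_mono) auto
    then have "(2 + real j) * (real j * (5 * real j - 16) - 4) \<ge> 0" by simp
    moreover have "2 * real m * (5 * real j - 2) \<ge> (2 + real j) * (2 + real j) * (5 * real j - 2)"
      using m 4 by (intro mult_right_mono) auto
    ultimately show ?thesis by (simp add: algebra_simps)
  qed (use m12 in simp_all)
qed

lemma divisor_gap_three:
  fixes m j :: nat
  assumes "j \<ge> 1" "(3 + j) * (3 + j) \<le> 3 * m" "m \<ge> 18"
  shows "6 * 3 * real j * (3 + real j) + real m * (3 + real j) \<le> 3 * 3 * real m * real j"
proof -
  consider "j = 1" | "j = 2" | "j = 3" | "j = 4" | "j \<ge> 5" using assms(1) by linarith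
  then show ?thesis
  proof cases
    case 5
    have "real ((3 + j) * (3 + j)) \<le> real (3 * m)" using assms(2) by (simp only: of_nat_le_iff)
    then have m: "(3 + real j) * (3 + real j) \<le> 3 * real m" by (simp add: algebra_simps)
    have "real j * (8 * real j - 33) \<ge> 5 * 7" using 5 by (intro mult_mono) auto
    then have "(3 + real j) * (real j * (8 * real j - 33) - 9) \<ge> 0" by simp
    moreover have "3 * real m * (8 * real j - 3) \<ge> (3 + real j) * (3 + real j) * (8 * real j - 3)"
      using m 5 by (intro mult_right_mono) auto
    ultimately show ?thesis by (simp add: algebra_simps)
  qed (use assms(3) in simp_all)
qed

lemma divisor_gap_factor_le_small_j:
  fixes l j :: nat
  assumes l: "l \<ge> 5" and j: "j \<ge> 1" and "2 * j \<le> 3 * l"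
  shows "6 * real j * (real l + real j) \<le> (real l + 1) * (3 * real l * real j - real l - real j)"
proof (cases "l \<ge> 8")
  case True
  define L J where "L = real l" and "J = real j"
  have L8: "L \<ge> 8" and J1: "J \<ge> 1" and J2: "2 * J \<le> 3 * L"
    using True j \<open>2 * j \<le> 3 * l\<close> by (auto simp: L_def J_def)
  have "L * L \<ge> 8 * L" using L8 by (intro mult_right_mono) auto
  then have "3 * L * L - 13 * L - 1 \<ge> 0" "2 * L * L - 14 * L - 1 \<ge> 0" using L8 by linarith+
  moreover have "3 * L * L - 4 * L - 1 - 6 * J \<ge> 3 * L * L - 13 * L - 1" using J2 by linarith
  ultimately have "J * (3 * L * L - 4 * L - 1 - 6 * J) \<ge> 1 * (3 * L * L - 13 * L - 1)"
    using J1 by (intro mult_mono) auto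
  with \<open>2 * L * L - 14 * L - 1 \<ge> 0\<close> show ?thesis by (simp add: L_def J_def algebra_simps)
next
  case False
  then have "l = 5 \<or> l = 6 \<or> l = 7" using l by linarith
  moreover have "j \<le> 10" using \<open>2 * j \<le> 3 * l\<close> False by linarith
  then have "j = 1 \<or> j = 2 \<or> j = 3 \<or> j = 4 \<or> j = 5 \<or> j = 6 \<or> j = 7 \<or> j = 8 \<or> j = 9 \<or> j = 10"
    using j by arith
  ultimately show ?thesis using \<open>2 * j \<le> 3 * l\<close> by (elim disjE) simp_all
qed

lemma divisor_gap_factor_le_large_j:
  fixes L J :: real
  assumes L5: "L \<ge> 5" and J1: "J \<ge> 1" and J2: "3 * L \<le> 2 * J"
  shows "6 * L * L * J \<le> (L + J) * (3 * L * J - L - J)"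
proof -
  have "3 * L * J * (J - L) \<ge> L * J * J"
  proof -
    have "(L * J) * (3 * (J - L)) \<ge> (L * J) * J" using J2 L5 J1 by (intro mult_left_mono) auto
    then show ?thesis by (simp add: algebra_simps)
  qed
  moreover have "L * (J * J) \<ge> 3 * (J * J)" using L5 by (intro mult_right_mono) auto
  then have "L * J * J \<ge> 3 * (J * J)" by (simp add: mult.assoc)
  moreover have "9 * ((L + J) * (L + J)) \<le> 25 * (J * J)"
  proof -
    have d: "3 * (L + J) \<le> 5 * J" using J2 by simp
    have "(3 * (L + J)) * (3 * (L + J)) \<le> (5 * J) * (5 * J)"
      by (rule mult_mono[OF d d]) (use L5 J1 in simp_all)
    then show ?thesis by (simp add: algebra_simps)
  qed
  ultimately have "3 * L * J * (J - L) \<ge> (L + J) * (L + J)"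
    using zero_le_square[of J] by linarith
  then show ?thesis by (simp add: algebra_simps)
qed

text \<open>For \<open>l \<ge> 5\<close> the bound \<open>m \<ge> l (l + 1)\<close> suffices when \<open>2 j \<le> 3 l\<close>, and
  \<open>(l + j)\<^sup>2 \<le> l m\<close> when \<open>j\<close> is larger.\<close>

lemma divisor_gap_ge_five:
  fixes l m j :: nat
  assumes l: "l \<ge> 5" and j: "j \<ge> 1" and lm: "(l + j) * (l + j) \<le> l * m" and m: "l * (l + 1) \<le> m"
  shows "6 * real l * real j * (real l + real j) + real m * (real l + real j)
    \<le> 3 * real l * real m * real j"
proof -
  define L J M where "L = real l" and "J = real j" and "M = real m"
  have L5: "L \<ge> 5" and J1: "J \<ge> 1" using l j by (auto simp: L_def J_def)
  have "real ((l + j) * (l + j)) \<le> real (l * m)" using lm by (simp only: of_nat_le_iff)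
  then have LM: "(L + J) * (L + J) \<le> L * M" by (simp add: L_def J_def M_def)
  have "real (l * (l + 1)) \<le> real m" using m by (simp only: of_nat_le_iff)
  then have M: "L * (L + 1) \<le> M" by (simp add: L_def M_def algebra_simps)
  have pos: "3 * L * J - L - J \<ge> 0"
  proof -
    have "L \<le> L * J" using mult_left_mono[of 1 J L] J1 L5 by simp
    moreover have "5 * J \<le> L * J" using J1 L5 by (intro mult_right_mono) auto
    ultimately have "3 * (L * J) - L - J \<ge> 0" using J1 by linarith
    then show ?thesis by (simp add: mult.assoc)
  qed
  have "6 * L * J * (L + J) \<le> M * (3 * L * J - L - J)"
  proof (cases "2 * j \<le> 3 * l")
    case True
    have "L * (6 * J * (L + J)) \<le> L * ((L + 1) * (3 * L * J - L - J))"
      using divisor_gap_factor_le_small_j[OF l j True] L5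
      by (intro mult_left_mono) (auto simp: L_def J_def)
    also have "\<dots> \<le> M * (3 * L * J - L - J)" using mult_right_mono[OF M pos] by (simp add: mult.assoc)
    finally show ?thesis by (simp add: algebra_simps)
  next
    case False
    then have "3 * L \<le> 2 * J" unfolding J_def L_def by linarith
    then have "(L + J) * (6 * L * L * J) \<le> (L + J) * (L + J) * (3 * L * J - L - J)"
      using divisor_gap_factor_le_large_j[OF L5 J1] L5 J1 by (simp add: mult.assoc mult_left_mono)
    also have "\<dots> \<le> L * M * (3 * L * J - L - J)" using LM pos by (intro mult_right_mono) auto
    finally have "L * (6 * L * J * (L + J)) \<le> L * (M * (3 * L * J - L - J))"
      by (simp add: algebra_simps)
    then show ?thesis using L5 by simp
  qed
  then show ?thesis by (simp add: L_def J_def M_def algebra_simps)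
qed

text \<open>For these few pairs \<open>(l, m)\<close> the geometric decay used below fails, but there is at most
  one inner divisor below \<open>\<surd>(l m)\<close>.\<close>

lemma lower_inner_divisor_small_cases:
  fixes l m e e' :: nat
  assumes least: "\<And>t. t \<ge> 2 \<Longrightarrow> t dvd l * m \<Longrightarrow> l \<le> t" and "l * (l + 1) \<le> m"
    and small: "(l = 2 \<and> m \<le> 13 \<and> m \<noteq> 12) \<or> (l = 3 \<and> m \<le> 17)"
    and e: "e \<in> inner_divisors l (l * m)" "e * e \<le> l * m"
    and e': "e' \<in> inner_divisors l (l * m)" "e' * e' \<le> l * m"
  shows "e = e' \<and> 3 * l * (e - l) * e + m * e \<le> 3 * l * m * (e - l)"
proof -
  have hm: "l = 2 \<and> (m = 6 \<or> m = 7 \<or> m = 8 \<or> m = 9 \<or> m = 10 \<or> m = 11 \<or> m = 13)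
      \<or> l = 3 \<and> (m = 13 \<or> m = 15 \<or> m = 17)"
  proof (cases "l = 2")
    case True
    then have "6 \<le> m" "m \<le> 13" "m \<noteq> 12" using small \<open>l * (l + 1) \<le> m\<close> by auto
    with True show ?thesis by arith
  next
    case False
    then have "l = 3" "12 \<le> m" "m \<le> 17" using small \<open>l * (l + 1) \<le> m\<close> by auto
    moreover have "odd m" using least[of 2] \<open>l = 3\<close> by auto
    ultimately show ?thesis by presburger
  qed
  have bound: "x \<le> 7" if "x * x \<le> l * m" for x
  proof (rule ccontr)
    assume "\<not> x \<le> 7"
    then have "8 * 8 \<le> x * x" by (intro mult_le_mono) auto
    with that hm show False by auto
  qed
  define c :: nat where "c = (if l = 3 then 5 else if m = 6 \<or> m = 9 then 3 else 4)"
  have unique: "x = c \<and> 3 * l * (x - l) * x + m * x \<le> 3 * l * m * (x - l)"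
    if "x \<in> inner_divisors l (l * m)" "x * x \<le> l * m" for x
  proof -
    have "x \<le> 7" "l < x" "x dvd l * m" "l < l * m div x"
      using that bound by (auto simp: inner_divisors_def)
    then have "x = 3 \<or> x = 4 \<or> x = 5 \<or> x = 6 \<or> x = 7" using hm by arith
    then show ?thesis using hm that(2) \<open>l < x\<close> \<open>x dvd l * m\<close> \<open>l < l * m div x\<close>
      by (elim disjE conjE) (simp_all add: c_def)
  qed
  show ?thesis using unique[OF e] unique[OF e'] by blast
qed

lemma lower_inner_divisor_gap:
  fixes l m e :: nat
  assumes "prime l" and least: "\<And>t. t \<ge> 2 \<Longrightarrow> t dvd l * m \<Longrightarrow> l \<le> t"
    and "l * (l + 1) \<le> m" and not_small: "\<not> ((l = 2 \<and> m \<le> 13 \<and> m \<noteq> 12) \<or> (l = 3 \<and> m \<le> 17))"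
    and e: "l < e" "e * e \<le> l * m"
  shows "6 * real l * real (e - l) * real e + real m * real e \<le> 3 * real l * real m * real (e - l)"
proof -
  define j where "j = e - l"
  have "j \<ge> 1" "e = l + j" "(l + j) * (l + j) \<le> l * m" using e by (auto simp: j_def)
  have "l \<ge> 2" using \<open>prime l\<close> prime_ge_2_nat by blast
  moreover have "l \<noteq> 4" using prime_odd_nat[OF \<open>prime l\<close>] by auto
  ultimately consider "l = 2" | "l = 3" | "l \<ge> 5" by linarith
  then have "6 * real l * real j * (real l + real j) + real m * (real l + real j)
      \<le> 3 * real l * real m * real j"
  proof cases
    case 1
    then show ?thesis
      using divisor_gap_two[OF \<open>j \<ge> 1\<close>] \<open>(l + j) * (l + j) \<le> l * m\<close> not_small \<open>l * (l + 1) \<le> m\<close>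
      by force
  next
    case 2
    then show ?thesis
      using divisor_gap_three[OF \<open>j \<ge> 1\<close>] \<open>(l + j) * (l + j) \<le> l * m\<close> not_small by force
  next
    case 3
    then show ?thesis
      using divisor_gap_ge_five \<open>j \<ge> 1\<close> \<open>(l + j) * (l + j) \<le> l * m\<close> \<open>l * (l + 1) \<le> m\<close> by blast
  qed
  then show ?thesis by (simp add: \<open>e = l + j\<close> algebra_simps)
qed

lemma sum_inner_divisors_le_twice_lower_half:
  fixes f :: "nat \<Rightarrow> real"
  assumes "d > 0" and sym: "\<And>e. e dvd d \<Longrightarrow> f (d div e) = f e" and nonneg: "\<And>e. f e \<ge> 0"
  shows "(\<Sum>e\<in>inner_divisors l d. f e) \<le> 2 * (\<Sum>e\<in>{e\<in>inner_divisors l d. e * e \<le> d}. f e)"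
proof -
  define E1 E2 where "E1 = {e\<in>inner_divisors l d. e * e \<le> d}"
    and "E2 = {e\<in>inner_divisors l d. \<not> e * e \<le> d}"
  have "finite E1" "finite E2" using finite_inner_divisors[OF \<open>d > 0\<close>] by (auto simp: E1_def E2_def)
  have codiv: "d div (d div e) = e" if "e dvd d" for e
    using that \<open>d > 0\<close> by (elim dvdE) auto
  have inj: "inj_on (\<lambda>e. d div e) E2"
  proof (rule inj_onI)
    fix x y assume "x \<in> E2" "y \<in> E2" and eq: "d div x = d div y"
    then have "x dvd d" "y dvd d" by (simp_all add: E2_def inner_divisors_def)
    then show "x = y" using codiv eq by metis
  qed
  have img: "(\<lambda>e. d div e) ` E2 \<subseteq> E1"
  proof
    fix y assume "y \<in> (\<lambda>e. d div e) ` E2"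
    then obtain x where x: "x dvd d" "l < x" "l < d div x" "d < x * x" "y = d div x"
      by (auto simp: E2_def inner_divisors_def)
    then have "x * y = d" by simp
    with x have "x * y < x * x" by simp
    then have "y * y \<le> x * y" by simp
    with x \<open>x * y = d\<close> codiv show "y \<in> E1" by (auto simp: E1_def inner_divisors_def)
  qed
  have "(\<Sum>e\<in>E2. f e) = (\<Sum>e\<in>E2. f (d div e))"
    using sym by (intro sum.cong) (auto simp: E2_def inner_divisors_def)
  also have "\<dots> = (\<Sum>e\<in>(\<lambda>e. d div e) ` E2. f e)" using inj by (simp add: sum.reindex)
  also have "\<dots> \<le> (\<Sum>e\<in>E1. f e)" using img \<open>finite E1\<close> nonneg by (intro sum_mono2) auto
  finally have E2_le: "(\<Sum>e\<in>E2. f e) \<le> (\<Sum>e\<in>E1. f e)" .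
  have "inner_divisors l d = E1 \<union> E2" "E1 \<inter> E2 = {}" by (auto simp: E1_def E2_def)
  then have "(\<Sum>e\<in>inner_divisors l d. f e) = (\<Sum>e\<in>E1. f e) + (\<Sum>e\<in>E2. f e)"
    using \<open>finite E1\<close> \<open>finite E2\<close> by (simp add: sum.union_disjoint)
  with E2_le show ?thesis unfolding E1_def by linarith
qed

lemma sum_lower_inner_divisors_le:
  fixes l m q :: nat
  assumes "prime l" and least: "\<And>t. t \<ge> 2 \<Longrightarrow> t dvd l * m \<Longrightarrow> l \<le> t" and "q \<ge> 2"
  shows "(\<Sum>e\<in>{e\<in>inner_divisors l (l * m). e * e \<le> l * m}. real q ^ (e + l * m div e))
    \<le> real q powr (real l + real m - real m / (3 * real l))"
proof -
  define T where "T = real q powr (real l + real m - real m / (3 * real l))"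
  define E where "E = {e\<in>inner_divisors l (l * m). e * e \<le> l * m}"
  have "l \<ge> 1" using \<open>prime l\<close> prime_gt_0_nat by (simp add: Suc_le_eq)
  have "T \<ge> 0" by (simp add: T_def)
  have term_le: "real q ^ (e + l * m div e) \<le> T * (1 / 2) ^ (s * (e - l))"
    if "e \<in> E" and "3 * real l * real (e - l) * real e * real (Suc s) + real m * real e
      \<le> 3 * real l * real m * real (e - l)" for e s
    using inner_divisor_term_le[OF \<open>q \<ge> 2\<close> \<open>l \<ge> 1\<close> _ _ that(2)] that(1)
    by (auto simp: T_def E_def inner_divisors_def)
  show ?thesis
  proof (cases "E = {}")
    case True
    have "(\<Sum>e\<in>E. real q ^ (e + l * m div e)) \<le> T" using True \<open>T \<ge> 0\<close> by simp
    then show ?thesis by (simp only: E_def T_def)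
  next
    case False
    then obtain e0 where "e0 \<in> E" by blast
    then have large: "l * (l + 1) \<le> m"
      using inner_divisor_imp_large[OF \<open>prime l\<close> least] by (auto simp: E_def)
    then have "finite E" using \<open>l \<ge> 1\<close> finite_inner_divisors[of "l * m" l] by (simp add: E_def)
    show ?thesis
    proof (cases "(l = 2 \<and> m \<le> 13 \<and> m \<noteq> 12) \<or> (l = 3 \<and> m \<le> 17)")
      case True
      note small = lower_inner_divisor_small_cases[OF least large True]
      have "E = {e0}" using small \<open>e0 \<in> E\<close> by (auto simp: E_def)
      have "3 * l * (e0 - l) * e0 + m * e0 \<le> 3 * l * m * (e0 - l)"
        using small[of e0 e0] \<open>e0 \<in> E\<close> by (simp add: E_def)
      then have "real (3 * l * (e0 - l) * e0 + m * e0) \<le> real (3 * l * m * (e0 - l))"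
        by (simp only: of_nat_le_iff)
      then have "real q ^ (e0 + l * m div e0) \<le> T * (1 / 2) ^ (0 * (e0 - l))"
        using \<open>e0 \<in> E\<close> by (intro term_le) simp_all
      then have "(\<Sum>e\<in>E. real q ^ (e + l * m div e)) \<le> T" using \<open>E = {e0}\<close> by simp
      then show ?thesis by (simp only: E_def T_def)
    next
      case False
      have "real q ^ (e + l * m div e) \<le> T * (1 / 2) ^ (1 * (e - l))" if "e \<in> E" for e
      proof (rule term_le[OF that])
        show "3 * real l * real (e - l) * real e * real (Suc 1) + real m * real e
            \<le> 3 * real l * real m * real (e - l)"
          using lower_inner_divisor_gap[OF \<open>prime l\<close> least large False, of e] that
          by (simp add: E_def inner_divisors_def)
      qed
      then have "real q ^ (e + l * m div e) \<le> T * (1 / 2) ^ (e - l)" if "e \<in> E" for e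
        using that by simp
      then have "(\<Sum>e\<in>E. real q ^ (e + l * m div e)) \<le> (\<Sum>e\<in>E. T * (1 / 2) ^ (e - l))"
        by (rule sum_mono)
      also have "\<dots> \<le> T * 1"
        unfolding sum_distrib_left[symmetric] using \<open>T \<ge> 0\<close> \<open>finite E\<close>
        by (intro mult_left_mono sum_half_power_diff_le_one) (auto simp: E_def inner_divisors_def)
      finally show ?thesis by (simp add: E_def T_def)
    qed
  qed
qed

lemma sum_inner_divisors_le:
  fixes l m q :: nat
  assumes "prime l" and least: "\<And>t. t \<ge> 2 \<Longrightarrow> t dvd l * m \<Longrightarrow> l \<le> t" and "q \<ge> 2"
  shows "(\<Sum>e\<in>inner_divisors l (l * m). real q ^ (e + l * m div e))
    \<le> 2 * real q powr (real l + real m - real m / (3 * real l))"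
proof (cases "inner_divisors l (l * m) = {}")
  case False
  then obtain e where "l < l * m div e" by (auto simp: inner_divisors_def)
  then have "l * m > 0" by (cases "l * m = 0") auto
  have "d div (d div e) = e" if "e dvd d" "d > 0" for d e :: nat
    using that by (elim dvdE) auto
  then have "(\<Sum>e\<in>inner_divisors l (l * m). real q ^ (e + l * m div e))
      \<le> 2 * (\<Sum>e\<in>{e\<in>inner_divisors l (l * m). e * e \<le> l * m}. real q ^ (e + l * m div e))"
    using \<open>l * m > 0\<close> by (intro sum_inner_divisors_le_twice_lower_half) (simp_all add: add.commute)
  also have "\<dots> \<le> 2 * real q powr (real l + real m - real m / (3 * real l))"
    using sum_lower_inner_divisors_le[OF assms] by simp
  finally show ?thesis .
qed simp

section \<open>Counting decomposable polynomials\<close>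

lemma card_field_ge_2: "CARD('a::{finite,field}) \<ge> 2"
proof -
  have "card {0::'a, 1} \<le> CARD('a)" by (rule card_mono) auto
  then show ?thesis by simp
qed

lemma intersection_exponent_le:
  fixes l m :: nat
  assumes "l \<ge> 2" "l < m"
  shows "real ((m - 1) div l) + real (if l dvd m then l else 1) + real m / (3 * real l) \<le> real m"
proof (cases "l dvd m")
  case True
  then obtain t where t: "m = l * t" by (auto elim: dvdE)
  with assms have "t \<ge> 2" by (cases t) auto
  have "m - 1 = (t - 1) * l + (l - 1)"
    using t \<open>t \<ge> 2\<close> assms(1) by (simp add: algebra_simps diff_mult_distrib)
  then have "(m - 1) div l = ((l - 1) + (t - 1) * l) div l" by (simp add: add.commute)
  also have "\<dots> = t - 1" using assms(1) by (subst div_mult_self1) simp_all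
  finally have "(m - 1) div l = t - 1" .
  define L T where "L = real l" and "T = real t"
  have "L \<ge> 2" "T \<ge> 2" using assms(1) \<open>t \<ge> 2\<close> by (auto simp: L_def T_def)
  then have "T * (3 * L - 4) \<ge> 2 * (3 * L - 4)" by (intro mult_right_mono) auto
  then have "(T - 1) + L + T / 3 \<le> L * T" using \<open>L \<ge> 2\<close> by (simp add: field_simps)
  then show ?thesis
    using True \<open>(m - 1) div l = t - 1\<close> \<open>t \<ge> 2\<close> \<open>L \<ge> 2\<close>
    by (simp add: t L_def T_def of_nat_diff field_simps)
next
  case False
  define k where "k = (m - 1) div l"
  have "real (k * l) \<le> real (m - 1)" by (simp only: of_nat_le_iff) (simp add: k_def)
  then have kl: "real k * real l \<le> real m - 1" using assms by (simp add: of_nat_diff)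
  define L M where "L = real l" and "M = real m"
  have "L \<ge> 2" "M \<ge> L + 1" using assms by (auto simp: L_def M_def)
  then have "M * (3 * L - 4) \<ge> (L + 1) * (3 * L - 4)" by (intro mult_right_mono) auto
  moreover have "(L + 1) * (3 * L - 4) \<ge> 3 * L - 3"
  proof -
    have "L * L \<ge> 2 * L" using \<open>L \<ge> 2\<close> by (intro mult_right_mono) auto
    moreover have "(L + 1) * (3 * L - 4) = 3 * (L * L) - L - 4" by (simp add: algebra_simps)
    ultimately show ?thesis using \<open>L \<ge> 2\<close> by linarith
  qed
  ultimately have "3 * L * M - 4 * M - 3 * L + 3 \<ge> 0" by (simp add: algebra_simps)
  moreover have "3 * L * real k \<le> 3 * (M - 1)" using kl by (simp add: L_def M_def algebra_simps)
  ultimately have "real k + 1 + M / (3 * L) \<le> M" using \<open>L \<ge> 2\<close> by (simp add: field_simps)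
  then show ?thesis using False by (simp add: k_def L_def M_def)
qed

lemma powr_of_nat_minus:
  fixes x y :: real
  assumes "x > 0"
  shows "x powr (real n - y) = x ^ n * x powr (- y)"
  using assms by (simp add: powr_diff powr_minus powr_realpow divide_inverse)

lemma card_compositions_inter_le_powr:
  fixes l m :: nat
  assumes "prime l" "l < m" and tame: "of_nat l \<noteq> (0::'a::{finite,field})"
  shows "real (card (compositions m l \<inter> compositions l m :: 'a poly set))
    \<le> real CARD('a) powr (real l + real m - real m / (3 * real l))"
proof -
  define q where "q = CARD('a)"
  define g where "g = (if l dvd m then l else 1)"
  have "l \<ge> 2" using \<open>prime l\<close> prime_ge_2_nat by blast
  have "q \<ge> 2" unfolding q_def by (rule card_field_ge_2)
  have "card (compositions m l \<inter> compositions l m :: 'a poly set)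
      \<le> q ^ (l - 1 + (m - 1) div l + card {s. s \<le> l * m \<and> l dvd s \<and> m dvd s})"
    using card_compositions_inter_le[OF tame] by (simp add: q_def)
  also have "\<dots> \<le> q ^ (l + (m - 1) div l + g)"
    using card_common_multiples_le[OF \<open>prime l\<close>, of m] \<open>l < m\<close> \<open>l \<ge> 2\<close> \<open>q \<ge> 2\<close>
    by (intro power_increasing) (simp_all add: g_def)
  finally have "real (card (compositions m l \<inter> compositions l m :: 'a poly set))
      \<le> real (q ^ (l + (m - 1) div l + g))"
    by (simp only: of_nat_le_iff)
  also have "\<dots> = real q powr real (l + (m - 1) div l + g)"
    using \<open>q \<ge> 2\<close> by (subst powr_realpow) simp_all
  also have "\<dots> \<le> real q powr (real l + real m - real m / (3 * real l))"
    using intersection_exponent_le[OF \<open>l \<ge> 2\<close> \<open>l < m\<close>] \<open>q \<ge> 2\<close>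
    by (intro powr_mono) (auto simp: g_def)
  finally show ?thesis by (simp add: q_def)
qed

lemma decomp_set_prime_square:
  assumes "prime l"
  shows "(decomp_set (l ^ 2) :: 'a::field poly set) = compositions l l"
  using assms nontrivial_divisors_prime_square prime_gt_0_nat
  by (simp add: decomp_set_eq_Union_compositions power2_eq_square)

lemma
  fixes l :: nat
  assumes "prime l"
  shows card_decomp_set_prime_square_le:
      "real (card (decomp_set (l ^ 2) :: 'a::{finite,field} poly set))
        \<le> real CARD('a) ^ (2 * l) * (1 - 1 / real CARD('a))" (is "?D \<le> ?A")
    and card_decomp_set_prime_square: "of_nat l \<noteq> (0::'a) \<Longrightarrow>
      real (card (decomp_set (l ^ 2) :: 'a poly set)) = real CARD('a) ^ (2 * l) * (1 - 1 / real CARD('a))"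
proof -
  have count: "real (card {g::'a poly. degree g = l} * card (monic_original l :: 'a poly set)) = ?A"
    using card_degree_eq_times_card_monic_original[where 'a = 'a, of l l]
      prime_gt_0_nat[OF \<open>prime l\<close>] by (simp add: mult_2)
  show "?D \<le> ?A"
    unfolding decomp_set_prime_square[OF assms] count[symmetric] of_nat_le_iff
    by (rule card_compositions_le)
  show "?D = ?A" if "of_nat l \<noteq> (0::'a)"
    unfolding decomp_set_prime_square[OF assms] count[symmetric]
    using card_compositions[OF that, of l] by simp
qed

lemma card_decomp_set_upper_bound:
  fixes l m :: nat
  assumes "prime l" and least: "\<And>t. t \<ge> 2 \<Longrightarrow> t dvd l * m \<Longrightarrow> l \<le> t" and "m \<ge> 2" "m \<noteq> l"
  shows "real (card (decomp_set (l * m) :: 'a::{finite,field} poly set))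
    \<le> 2 * real CARD('a) ^ (l + m) * (1 - 1 / real CARD('a))
      * (1 + real CARD('a) powr (- (real m / (3 * real l))))"
proof -
  define q where "q = real CARD('a)"
  define c where "c e = q ^ (e + l * m div e) * (1 - 1 / q)" for e
  have "q \<ge> 2" using card_field_ge_2[where 'a = 'a] by (simp add: q_def)
  have "l > 0" "m > 0" using \<open>prime l\<close> \<open>m \<ge> 2\<close> prime_gt_0_nat by auto
  have "l \<notin> inner_divisors l (l * m)" "m \<notin> inner_divisors l (l * m)"
    using \<open>l > 0\<close> by (auto simp: inner_divisors_def)
  moreover have "c l = q ^ (l + m) * (1 - 1 / q)" "c m = q ^ (l + m) * (1 - 1 / q)"
    using \<open>l > 0\<close> \<open>m > 0\<close> by (simp_all add: c_def add.commute)
  ultimately have "(\<Sum>e\<in>nontrivial_divisors (l * m). c e) = 2 * (q ^ (l + m) * (1 - 1 / q))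
      + (1 - 1 / q) * (\<Sum>e\<in>inner_divisors l (l * m). q ^ (e + l * m div e))"
    using nontrivial_divisors_eq_insert_inner_divisors[OF assms(1-3)] \<open>m \<noteq> l\<close>
      finite_inner_divisors[of "l * m" l] \<open>l > 0\<close> \<open>m > 0\<close>
    by (simp add: sum_distrib_left c_def mult.commute)
  also have "\<dots> \<le> 2 * (q ^ (l + m) * (1 - 1 / q))
      + (1 - 1 / q) * (2 * q powr (real l + real m - real m / (3 * real l)))"
    using sum_inner_divisors_le[OF \<open>prime l\<close> least card_field_ge_2] \<open>q \<ge> 2\<close>
    by (intro add_left_mono mult_left_mono) (simp_all add: q_def)
  also have "\<dots> = 2 * q ^ (l + m) * (1 - 1 / q) * (1 + q powr (- (real m / (3 * real l))))"
    using \<open>q \<ge> 2\<close> powr_of_nat_minus[of q "l + m"] by (simp add: algebra_simps)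
  finally show ?thesis
    using card_decomp_set_le_sum[of "l * m", where 'a = 'a] by (simp add: c_def q_def)
qed

lemma card_decomp_set_lower_bound:
  fixes l m :: nat
  assumes "prime l" and least: "\<And>t. t \<ge> 2 \<Longrightarrow> t dvd l * m \<Longrightarrow> l \<le> t" and "m \<ge> 2" "m \<noteq> l"
    and tame: "of_nat l \<noteq> (0::'a::{finite,field})" "of_nat m \<noteq> (0::'a)"
  shows "2 * real CARD('a) ^ (l + m) * (1 - 1 / real CARD('a))
      * (1 - real CARD('a) powr (- (real m / (3 * real l))))
    \<le> real (card (decomp_set (l * m) :: 'a poly set))"
proof -
  define q where "q = real CARD('a)"
  define X where "X = q ^ (l + m) * (1 - 1 / q)"
  define \<delta> where "\<delta> = q powr (- (real m / (3 * real l)))"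
  define A B where "A = (compositions m l :: 'a poly set)"
    and "B = (compositions l m :: 'a poly set)"
  have "q \<ge> 2" using card_field_ge_2[where 'a = 'a] by (simp add: q_def)
  have "l \<ge> 2" using \<open>prime l\<close> prime_ge_2_nat by blast
  have "l \<le> m" using least[of m] \<open>m \<ge> 2\<close> by simp
  with \<open>m \<noteq> l\<close> have "l < m" by simp
  have "real (card A) = X"
    using card_compositions[OF tame(2), of l] \<open>l \<ge> 2\<close> \<open>m \<ge> 2\<close>
      card_degree_eq_times_card_monic_original[where 'a = 'a, of m l]
    by (simp add: A_def X_def q_def add.commute)
  have "real (card B) = X"
    using card_compositions[OF tame(1), of m] \<open>l \<ge> 2\<close> \<open>m \<ge> 2\<close>
      card_degree_eq_times_card_monic_original[where 'a = 'a, of l m]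
    by (simp add: B_def X_def q_def)
  have "A \<union> B \<subseteq> decomp_set (l * m)"
    using nontrivial_divisors_eq_insert_inner_divisors[OF assms(1-3)] \<open>l \<ge> 2\<close> \<open>m \<ge> 2\<close>
    by (auto simp: decomp_set_eq_Union_compositions A_def B_def)
  then have "card (A \<union> B) \<le> card (decomp_set (l * m) :: 'a poly set)"
    by (rule card_mono[OF finite_decomp_set])
  moreover have "card A + card B = card (A \<union> B) + card (A \<inter> B)"
    by (rule card_Un_Int) (simp_all add: A_def B_def finite_compositions)
  ultimately have "real (card A) + real (card B)
      \<le> real (card (decomp_set (l * m) :: 'a poly set)) + real (card (A \<inter> B))"
    by (simp only: of_nat_add[symmetric] of_nat_le_iff)
  moreover have "real (card (A \<inter> B)) \<le> q ^ (l + m) * \<delta>"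
    using card_compositions_inter_le_powr[OF \<open>prime l\<close> \<open>l < m\<close> tame(1)] \<open>q \<ge> 2\<close>
      powr_of_nat_minus[of q "l + m"] by (simp add: A_def B_def q_def \<delta>_def add_diff_eq)
  moreover have "q ^ (l + m) * \<delta> \<le> 2 * X * \<delta>"
    using \<open>q \<ge> 2\<close> by (intro mult_right_mono) (simp_all add: X_def \<delta>_def field_simps)
  ultimately have "2 * X * (1 - \<delta>) \<le> real (card (decomp_set (l * m) :: 'a poly set))"
    using \<open>real (card A) = X\<close> \<open>real (card B) = X\<close> by (simp add: algebra_simps)
  then show ?thesis by (simp add: X_def q_def \<delta>_def)
qed

lemma decomp_set_prime: "prime d \<Longrightarrow> decomp_set d = {}"
  by (simp add: decomp_set_eq_Union_compositions nontrivial_divisors_prime)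

text \<open>The paper's \<open>\<alpha>\<^sub>d\<close> in terms of \<open>d = l m\<close>, where \<open>l\<close> is the least prime factor of \<open>d\<close>.\<close>

definition main_term :: "nat \<Rightarrow> nat \<Rightarrow> nat \<Rightarrow> real" where
  "main_term q l m = (if m = 1 then 0
     else if m = l then real q ^ (2 * l) * (1 - 1 / real q)
     else 2 * real q ^ (l + m) * (1 - 1 / real q))"

lemma main_term_nonneg: "q \<ge> 1 \<Longrightarrow> main_term q l m \<ge> 0"
  by (simp add: main_term_def field_simps)

lemma alpha_d_eq_main_term:
  assumes "prime l" "min_prime_factor (l * m) = l" "m \<ge> 1"
  shows "alpha_d q (l * m) = main_term q l m"
proof -
  have "l > 0" using \<open>prime l\<close> prime_gt_0_nat by blast
  then have "l * m = l \<longleftrightarrow> m = 1" "l * m = l ^ 2 \<longleftrightarrow> m = l" "l * m div l = m"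
    by (simp_all add: power2_eq_square)
  then show ?thesis by (simp add: alpha_d_def main_term_def assms(2))
qed

lemma card_decomp_set_le_main_term:
  fixes l m :: nat
  assumes "prime l" and least: "\<And>t. t \<ge> 2 \<Longrightarrow> t dvd l * m \<Longrightarrow> l \<le> t" and "m \<ge> 1"
  shows "real (card (decomp_set (l * m) :: 'a::{finite,field} poly set))
    \<le> main_term CARD('a) l m * (1 + real CARD('a) powr (- (real m / (3 * real l))))"
proof -
  consider "m = 1" | "m = l" | "m \<ge> 2" "m \<noteq> l" using \<open>m \<ge> 1\<close> by linarith
  then show ?thesis
  proof cases
    case 1
    then show ?thesis
      using decomp_set_prime[OF \<open>prime l\<close>, where 'a = 'a] by (simp add: main_term_def)
  next
    case 2
    then have "l * m = l ^ 2"
      "main_term CARD('a) l m = real CARD('a) ^ (2 * l) * (1 - 1 / real CARD('a))"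
      using \<open>prime l\<close> by (auto simp: main_term_def power2_eq_square)
    then have "real (card (decomp_set (l * m) :: 'a poly set)) \<le> main_term CARD('a) l m"
      using card_decomp_set_prime_square_le[OF \<open>prime l\<close>, where 'a = 'a] by simp
    moreover have "0 \<le> main_term CARD('a) l m * real CARD('a) powr (- (real m / (3 * real l)))"
      by (simp add: main_term_nonneg)
    ultimately show ?thesis unfolding distrib_left mult_1_right by linarith
  next
    case 3
    then show ?thesis
      using card_decomp_set_upper_bound[OF \<open>prime l\<close> least 3] by (simp add: main_term_def)
  qed
qed

lemma main_term_le_card_decomp_set:
  fixes l m :: nat
  assumes "prime l" and least: "\<And>t. t \<ge> 2 \<Longrightarrow> t dvd l * m \<Longrightarrow> l \<le> t" and "m \<ge> 1"
    and tame: "of_nat l \<noteq> (0::'a::{finite,field})" "of_nat m \<noteq> (0::'a)"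
  shows "main_term CARD('a) l m * (1 - real CARD('a) powr (- (real m / (3 * real l))))
    \<le> real (card (decomp_set (l * m) :: 'a poly set))"
proof -
  consider "m = 1" | "m = l" | "m \<ge> 2" "m \<noteq> l" using \<open>m \<ge> 1\<close> by linarith
  then show ?thesis
  proof cases
    case 1
    then show ?thesis by (simp add: main_term_def)
  next
    case 2
    then have "l * m = l ^ 2"
      "main_term CARD('a) l m = real CARD('a) ^ (2 * l) * (1 - 1 / real CARD('a))"
      using \<open>prime l\<close> by (auto simp: main_term_def power2_eq_square)
    then have "real (card (decomp_set (l * m) :: 'a poly set)) = main_term CARD('a) l m"
      using card_decomp_set_prime_square[OF \<open>prime l\<close> tame(1)] by simp
    moreover have "0 \<le> main_term CARD('a) l m * real CARD('a) powr (- (real m / (3 * real l)))"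
      by (simp add: main_term_nonneg)
    ultimately show ?thesis unfolding right_diff_distrib mult_1_right by linarith
  next
    case 3
    then show ?thesis
      using card_decomp_set_lower_bound[OF \<open>prime l\<close> least 3 tame] by (simp add: main_term_def)
  qed
qed

theorem corollary5p5:
  fixes d :: nat
  assumes "d \<ge> 2"
  shows "(prime d \<longrightarrow> (decomp_set d :: ('a::{finite,field}) poly set) = {})
    \<and> real (card (decomp_set d :: 'a poly set))
        \<le> alpha_d CARD('a) d * (1 + real CARD('a) powr
             (- (real d / (3 * real (min_prime_factor d) ^ 2))))
    \<and> (\<not> CHAR('a) dvd d \<longrightarrow>
        \<bar>real (card (decomp_set d :: 'a poly set)) - alpha_d CARD('a) d\<bar>
          \<le> alpha_d CARD('a) d * real CARD('a) powr
             (- (real d / (3 * real (min_prime_factor d) ^ 2))))"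
proof -
  define l m where "l = min_prime_factor d" and "m = d div l"
  have "prime l" "l dvd d"
    using prime_min_prime_factor min_prime_factor_dvd assms by (auto simp: l_def)
  then have d: "d = l * m" by (simp add: m_def)
  have least: "l \<le> t" if "t \<ge> 2" "t dvd l * m" for t
  proof -
    have "t dvd d" using that(2) d by simp
    then show ?thesis using min_prime_factor_le[OF assms that(1)] by (simp add: l_def)
  qed
  have "m \<ge> 1" using assms d by (cases m) auto
  have \<alpha>: "alpha_d CARD('a) d = main_term CARD('a) l m"
    unfolding d by (rule alpha_d_eq_main_term[OF \<open>prime l\<close> _ \<open>m \<ge> 1\<close>])
      (simp only: d[symmetric] l_def[symmetric])
  have \<delta>: "real d / (3 * real (min_prime_factor d) ^ 2) = real m / (3 * real l)"
    unfolding l_def[symmetric] using \<open>prime l\<close> prime_gt_0_nat by (simp add: d power2_eq_square)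
  have "real (card (decomp_set d :: 'a poly set)) \<le> main_term CARD('a) l m
      * (1 + real CARD('a) powr (- (real m / (3 * real l))))"
    using card_decomp_set_le_main_term[OF \<open>prime l\<close> least \<open>m \<ge> 1\<close>] by (simp add: d)
  moreover have "main_term CARD('a) l m * (1 - real CARD('a) powr (- (real m / (3 * real l))))
      \<le> real (card (decomp_set d :: 'a poly set))" if "\<not> CHAR('a) dvd d"
  proof -
    have "of_nat l \<noteq> (0::'a)" "of_nat m \<noteq> (0::'a)"
      using that d by (auto simp: of_nat_eq_0_iff_char_dvd intro: dvd_mult dvd_mult2)
    then show ?thesis
      using main_term_le_card_decomp_set[OF \<open>prime l\<close> least \<open>m \<ge> 1\<close>] d by simp
  qed
  ultimately show ?thesis
    unfolding \<alpha> \<delta> using decomp_set_prime by (auto simp: abs_le_iff algebra_simps)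
qed

end
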